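(* For every standard tableau $T$ of degree $n\ge2$ in which $2$ precedes $1$ in the reading word, $$\overset{*}{\mathbb B}{}_2^{(1)}T=R_{n-1}\bar\sigma_{n-2}\cdots\bar\sigma_1\,r_{(10\to11)}\,\tau_{-1}T.$$ Moreover, for every word $w$ with $(\mathrm{ev}_a,\mathrm{ev}_{a+1})\in\{(1,2),(2,1)\}$, $\sigma_a(w^R)=(\bar\sigma_aw)^R$, where $w^R=w_n\cdots w_1$ is the reversal of $w=w_1\cdots w_n$.
   Context: Tableaux (French convention: rows of lengths $\lambda_1\ge\lambda_2\ge\cdots$ from bottom to top). A tableau is a filling of a diagram, identified with (shape, reading word), the reading word listing the entries row by row from top row to bottom row, each row left to right; word operators act on tableaux via reading words, keeping the shape. Standard tableau of degree $n$: rows increase left to right, columns increase upwards, entries $1,\dots,n$ each once. $T^t$ is the transpose (reflection of diagram and entries across the main diagonal). Word operators (compositions act right to left): $\tau_{-1}$ subtracts $1$ from every letter; $r_{(ab\to cd)}$ applies to a word whose letters in $\{a,b\}$ are, left to right, exactly one $a$ then one $b$, and replaces them by $c$ and $d$ respectively; $R_a$ deletes all letters (cells) equal to $a$; for a word with $(\mathrm{ev}_a,\mathrm{ev}_{a+1})\in\{(1,2),(2,1)\}$ ($\mathrm{ev}_i$ = number of occurrences of $i$) and $b=a+1$, $\sigma_a$ replaces the subword of letters in $\{a,b\}$, in place, via $aab\leftrightarrow abb$, $aba\leftrightarrow bba$, $baa\leftrightarrow bab$, and $\bar\sigma_a$ replaces it via $aab\leftrightarrow bab$, $aba\leftrightarrow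 abb$, $baa\leftrightarrow bba$. For a standard tableau $T$ of degree $n\ge2$ in which $1$ precedes $2$ in the reading word, $\overset{*}{\mathbb B}{}_2^{(0)}T=R_{n-1}\sigma_{n-2}\cdots\sigma_1r_{(01\to11)}\tau_{-1}T$; for a standard $T$ of degree $n\ge2$ in which $2$ precedes $1$, $\overset{*}{\mathbb B}{}_2^{(1)}T=(\overset{*}{\mathbb B}{}_2^{(0)}T^t)^t$. *)

theory Defs
  imports Main "HOL-Library.Multiset"
begin

text \<open>Tableaux (French convention): a tableau is the list of its rows, bottom row first,
  each row listed left to right.  Letters are integers.\<close>

type_synonym word = "int list"
type_synonym tableau = "int list list"

definition reading_word :: "tableau \<Rightarrow> word" where
  "reading_word T = concat (rev T)"

definition shape :: "tableau \<Rightarrow> nat list" where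
  "shape T = map length T"

definition standard_tableau :: "nat \<Rightarrow> tableau \<Rightarrow> bool" where
  "standard_tableau n T \<longleftrightarrow>
     (\<forall>r\<in>set T. r \<noteq> []) \<and>
     sorted_wrt (\<ge>) (shape T) \<and>
     (\<forall>r\<in>set T. sorted_wrt (<) r) \<and>
     (\<forall>i j. Suc i < length T \<and> j < length (T ! Suc i) \<longrightarrow> T ! i ! j < T ! Suc i ! j) \<and>
     mset (concat T) = mset (map int [1..<Suc n])"

definition tab_transpose :: "tableau \<Rightarrow> tableau" where
  "tab_transpose T = transpose T"

definition precedes :: "int \<Rightarrow> int \<Rightarrow> word \<Rightarrow> bool" where
  "precedes x y w \<longleftrightarrow> (\<exists>i j. i < j \<and> j < length w \<and> w ! i = x \<and> w ! j = y)"

fun refill :: "nat list \<Rightarrow> word \<Rightarrow> int list list" where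
  "refill [] w = []"
| "refill (l # ls) w = take l w # refill ls (drop l w)"

definition tab_op :: "(word \<Rightarrow> word) \<Rightarrow> tableau \<Rightarrow> tableau" where
  "tab_op f T = rev (refill (map length (rev T)) (f (reading_word T)))"

definition tau_m1 :: "word \<Rightarrow> word" where
  "tau_m1 w = map (\<lambda>x. x - 1) w"

text \<open>r_(ab -> cd), on its domain: replace the letter a by c and b by d.\<close>
definition r_op :: "int \<Rightarrow> int \<Rightarrow> int \<Rightarrow> int \<Rightarrow> word \<Rightarrow> word" where
  "r_op a b c d w = map (\<lambda>x. if x = a then c else if x = b then d else x) w"

definition R_op :: "int \<Rightarrow> tableau \<Rightarrow> tableau" where
  "R_op a T = filter (\<lambda>r. r \<noteq> []) (map (filter (\<lambda>x. x \<noteq> a)) T)"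

fun replace_sub :: "(int \<Rightarrow> bool) \<Rightarrow> word \<Rightarrow> word \<Rightarrow> word" where
  "replace_sub P [] s = []"
| "replace_sub P (x # xs) s =
     (if P x then hd s # replace_sub P xs (tl s) else x # replace_sub P xs s)"

definition sigma_pat :: "int \<Rightarrow> int \<Rightarrow> word \<Rightarrow> word" where
  "sigma_pat a b s =
    (if s = [a,a,b] then [a,b,b] else if s = [a,b,b] then [a,a,b]
     else if s = [a,b,a] then [b,b,a] else if s = [b,b,a] then [a,b,a]
     else if s = [b,a,a] then [b,a,b] else if s = [b,a,b] then [b,a,a]
     else s)"

definition sigmabar_pat :: "int \<Rightarrow> int \<Rightarrow> word \<Rightarrow> word" where
  "sigmabar_pat a b s =
    (if s = [a,a,b] then [b,a,b] else if s = [b,a,b] then [a,a,b]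
     else if s = [a,b,a] then [a,b,b] else if s = [a,b,b] then [a,b,a]
     else if s = [b,a,a] then [b,b,a] else if s = [b,b,a] then [b,a,a]
     else s)"

definition sigma_op :: "int \<Rightarrow> word \<Rightarrow> word" where
  "sigma_op a w = (let P = (\<lambda>x. x = a \<or> x = a + 1) in
      replace_sub P w (sigma_pat a (a + 1) (filter P w)))"

definition sigmabar_op :: "int \<Rightarrow> word \<Rightarrow> word" where
  "sigmabar_op a w = (let P = (\<lambda>x. x = a \<or> x = a + 1) in
      replace_sub P w (sigmabar_pat a (a + 1) (filter P w)))"

definition sigma_chain :: "nat \<Rightarrow> word \<Rightarrow> word" where
  "sigma_chain n w = fold (\<lambda>a v. sigma_op (int a) v) [1..<n - 1] w"

definition sigmabar_chain :: "nat \<Rightarrow> word \<Rightarrow> word" where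
  "sigmabar_chain n w = fold (\<lambda>a v. sigmabar_op (int a) v) [1..<n - 1] w"

definition B2_0 :: "tableau \<Rightarrow> tableau" where
  "B2_0 T = (let n = length (concat T) in
     R_op (int n - 1) (tab_op (\<lambda>w. sigma_chain n (r_op 0 1 1 1 (tau_m1 w))) T))"

definition B2_1 :: "tableau \<Rightarrow> tableau" where
  "B2_1 T = tab_transpose (B2_0 (tab_transpose T))"

end

theory Submission
  imports Defs
begin

text \<open>
  On a word in which each of the letters \<open>1, \<dots>, n\<close> occurs once, the chain
  \<open>\<sigma>\<^bsub>n-2\<^esub> \<cdots> \<sigma>\<^sub>1 r\<^bsub>(01\<rightarrow>11)\<^esub> \<tau>\<^bsub>-1\<^esub>\<close> only relabels the letters: just before
  \<open>\<sigma>\<^bsub>m+1\<^esub>\<close> acts, the label \<open>m+1\<close> sits on two letters \<open>p, q\<close> and the label \<open>m+2\<close> on the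
  letter \<open>m+3\<close>, and \<open>\<sigma>\<^bsub>m+1\<^esub>\<close> keeps one of \<open>p, q\<close> at \<open>m+1\<close> (the later one if \<open>m+3\<close>
  lies between them, the earlier one otherwise) and promotes the other one together with
  \<open>m+3\<close>.  So the result depends only on the relative order of these triples of letters.

  Reversing a word exchanges \<open>\<sigma>\<^sub>a\<close> and \<open>\<sigma>\<^sub>a\<close>-bar and turns \<open>r\<^bsub>(10\<rightarrow>11)\<^esub>\<close> into
  \<open>r\<^bsub>(01\<rightarrow>11)\<^esub>\<close>.  Hence both sides of the identity relabel the cells of \<open>T\<close> by this
  rule, the left side reading the letters in the order of the reading word of \<open>T\<^sup>t\<close> (columns
  right to left, each bottom to top), the right side in the reversed reading order of \<open>T\<close>
  (rows bottom to top, each right to left).  When \<open>2\<close> lies above \<open>1\<close>, the pair \<open>p, q\<close> always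
  occupies two outer corners of the subtableau of letters \<open>\<le> m+2\<close>, and on such a pair together
  with the letter \<open>m+3\<close> the two reading orders agree.  Finally the two cells labelled \<open>n-1\<close>
  form an upper set, so deleting them commutes with transposition.
\<close>

section \<open>Reversal of words\<close>

lemma replace_sub_append:
  "replace_sub P (xs @ ys) s = replace_sub P xs s @ replace_sub P ys (drop (length (filter P xs)) s)"
  by (induction xs arbitrary: s) (auto simp: drop_Suc tl_drop)

lemma replace_sub_append_surplus:
  "length (filter P xs) \<le> length s \<Longrightarrow> replace_sub P xs (s @ t) = replace_sub P xs s"
proof (induction xs arbitrary: s)
  case (Cons x xs)
  show ?case
  proof (cases "P x")
    case True
    then obtain a s' where "s = a # s'" using Cons.prems by (cases s) auto
    then show ?thesis using True Cons.prems Cons.IH[of s'] by simp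
  qed (use Cons in simp)
qed simp

lemma replace_sub_rev:
  "length s = length (filter P w) \<Longrightarrow> replace_sub P (rev w) (rev s) = rev (replace_sub P w s)"
proof (induction w arbitrary: s)
  case (Cons x xs)
  show ?case
  proof (cases "P x")
    case True
    then obtain s0 s' where s: "s = s0 # s'" using Cons.prems by (cases s) auto
    have len: "length s' = length (filter P xs)" using Cons.prems True s by simp
    have "replace_sub P (rev (x # xs)) (rev s) =
          replace_sub P (rev xs) (rev s' @ [s0]) @
          replace_sub P [x] (drop (length (filter P (rev xs))) (rev s' @ [s0]))"
      by (simp add: s replace_sub_append)
    also have "\<dots> = rev (replace_sub P xs s') @ [s0]"
      using replace_sub_append_surplus[of P "rev xs" "rev s'" "[s0]"] len Cons.IH[OF len] True
      by (simp add: rev_filter[symmetric])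
    finally show ?thesis using True s by simp
  next
    case False
    then have "length s = length (filter P xs)" using Cons.prems by simp
    then show ?thesis using False Cons.IH
      by (simp add: replace_sub_append rev_filter[symmetric])
  qed
qed simp

lemma sigma_pat_rev: "a \<noteq> b \<Longrightarrow> sigma_pat a b (rev s) = rev (sigmabar_pat a b s)"
  unfolding sigma_pat_def sigmabar_pat_def by (auto simp: rev_swap)

lemma length_sigmabar_pat: "length (sigmabar_pat a b s) = length s"
  unfolding sigmabar_pat_def by auto

lemma sigma_op_rev: "sigma_op a (rev w) = rev (sigmabar_op a w)"
proof -
  let ?P = "\<lambda>x. x = a \<or> x = a + 1"
  have "sigma_op a (rev w) = replace_sub ?P (rev w) (sigma_pat a (a + 1) (rev (filter ?P w)))"
    by (simp add: sigma_op_def Let_def rev_filter)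
  also have "\<dots> = replace_sub ?P (rev w) (rev (sigmabar_pat a (a + 1) (filter ?P w)))"
    by (simp add: sigma_pat_rev)
  also have "\<dots> = rev (replace_sub ?P w (sigmabar_pat a (a + 1) (filter ?P w)))"
    by (rule replace_sub_rev) (simp add: length_sigmabar_pat)
  finally show ?thesis by (simp add: sigmabar_op_def Let_def)
qed

lemma sigmabar_chain_conv_sigma_chain: "sigmabar_chain n w = rev (sigma_chain n (rev w))"
proof -
  have "fold (\<lambda>a v. sigmabar_op (int a) v) as w = rev (fold (\<lambda>a v. sigma_op (int a) v) as (rev w))"
    for as w by (induction as arbitrary: w) (simp_all add: sigma_op_rev)
  then show ?thesis by (simp add: sigmabar_chain_def sigma_chain_def)
qed

lemma r_op_swap: "r_op a b c c w = r_op b a c c w"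
  by (auto simp: r_op_def)

section \<open>The relabelling performed by the \<open>\<sigma>\<close>-chain\<close>

lemma precedes_Nil [simp]: "\<not> precedes x y []"
  by (simp add: precedes_def)

lemma precedes_Cons: "precedes x y (z # v) \<longleftrightarrow> (z = x \<and> y \<in> set v) \<or> precedes x y v"
proof
  assume "precedes x y (z # v)"
  then obtain i j where ij: "i < j" "j < length (z # v)" "(z # v) ! i = x" "(z # v) ! j = y"
    unfolding precedes_def by blast
  then obtain j' where j: "j = Suc j'" by (cases j) auto
  show "(z = x \<and> y \<in> set v) \<or> precedes x y v"
  proof (cases i)
    case 0
    then show ?thesis using ij j by auto
  next
    case (Suc i')
    then show ?thesis using ij j unfolding precedes_def by auto
  qed
next
  assume "(z = x \<and> y \<in> set v) \<or> precedes x y v"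
  then show "precedes x y (z # v)"
  proof
    assume "z = x \<and> y \<in> set v"
    then obtain j where "j < length v" "v ! j = y" by (auto simp: in_set_conv_nth)
    with \<open>z = x \<and> y \<in> set v\<close> show ?thesis
      unfolding precedes_def by (intro exI[of _ 0] exI[of _ "Suc j"]) auto
  next
    assume "precedes x y v"
    then obtain i j where "i < j" "j < length v" "v ! i = x" "v ! j = y"
      unfolding precedes_def by blast
    then show ?thesis unfolding precedes_def by (intro exI[of _ "Suc i"] exI[of _ "Suc j"]) auto
  qed
qed

lemma precedes_imp_mem: "precedes x y u \<Longrightarrow> x \<in> set u \<and> y \<in> set u"
  by (induction u) (auto simp: precedes_Cons)

lemma precedes_filterD: "precedes x y (filter Q u) \<Longrightarrow> precedes x y u"
  by (induction u) (auto simp: precedes_Cons split: if_splits)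

lemma precedes_asym: "distinct u \<Longrightarrow> precedes x y u \<Longrightarrow> \<not> precedes y x u"
  by (induction u) (auto simp: precedes_Cons dest: precedes_imp_mem)

lemma precedes_append:
  "precedes x y (r @ w) \<longleftrightarrow> precedes x y r \<or> precedes x y w \<or> (x \<in> set r \<and> y \<in> set w)"
  by (induction r) (auto simp: precedes_Cons)

lemma precedes_rev: "precedes x y (rev u) \<longleftrightarrow> precedes y x u"
  by (induction u) (auto simp: precedes_Cons precedes_append dest: precedes_imp_mem)

definition between :: "(int \<Rightarrow> int \<Rightarrow> bool) \<Rightarrow> int \<Rightarrow> int \<Rightarrow> int \<Rightarrow> bool" where
  "between lt p z q \<longleftrightarrow> lt p z \<and> lt z q \<or> lt q z \<and> lt z p"

definition kept :: "(int \<Rightarrow> int \<Rightarrow> bool) \<Rightarrow> int \<Rightarrow> int \<Rightarrow> int \<Rightarrow> int" where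
  "kept lt p q z =
     (if between lt p z q then (if lt p q then q else p) else (if lt p q then p else q))"

definition promoted :: "(int \<Rightarrow> int \<Rightarrow> bool) \<Rightarrow> int \<Rightarrow> int \<Rightarrow> int \<Rightarrow> int" where
  "promoted lt p q z =
     (if between lt p z q then (if lt p q then p else q) else (if lt p q then q else p))"

text \<open>After \<open>\<sigma>\<^sub>m\<close> (for \<open>m = 0\<close>: after \<open>r\<^bsub>(01\<rightarrow>11)\<^esub> \<tau>\<^bsub>-1\<^esub>\<close>) the letters \<open>top_pair lt m\<close>
  carry the label \<open>m + 1\<close> and the letter \<open>x\<close> carries \<open>chain_label lt m x\<close>, where \<open>lt\<close> is
  the order of the letters in the word.\<close>

fun top_pair :: "(int \<Rightarrow> int \<Rightarrow> bool) \<Rightarrow> nat \<Rightarrow> int \<times> int" where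
  "top_pair lt 0 = (1, 2)"
| "top_pair lt (Suc m) =
     (promoted lt (fst (top_pair lt m)) (snd (top_pair lt m)) (int m + 3), int m + 3)"

fun chain_label :: "(int \<Rightarrow> int \<Rightarrow> bool) \<Rightarrow> nat \<Rightarrow> int \<Rightarrow> int" where
  "chain_label lt 0 x = (if x = 1 \<or> x = 2 then 1 else x - 1)"
| "chain_label lt (Suc m) x =
     (if chain_label lt m x = int m + 1 \<or> chain_label lt m x = int m + 2 then
        (if x = kept lt (fst (top_pair lt m)) (snd (top_pair lt m)) (int m + 3)
         then int m + 1 else int m + 2)
      else chain_label lt m x)"

lemma kept_promoted:
  "p \<noteq> q \<Longrightarrow> {kept lt p q z, promoted lt p q z} = {p, q} \<and> kept lt p q z \<noteq> promoted lt p q z"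
  by (auto simp: kept_def promoted_def)

definition chain_label_inv :: "(int \<Rightarrow> int \<Rightarrow> bool) \<Rightarrow> nat \<Rightarrow> bool" where
  "chain_label_inv lt m \<longleftrightarrow> (let p = fst (top_pair lt m); q = snd (top_pair lt m) in
     p \<noteq> q \<and> p \<in> {1..int m + 2} \<and> q \<in> {1..int m + 2} \<and>
     (\<forall>x. (x \<ge> int m + 3 \<longrightarrow> chain_label lt m x = x - 1) \<and>
          (x = p \<or> x = q \<longrightarrow> chain_label lt m x = int m + 1) \<and>
          (1 \<le> x \<and> x \<le> int m + 2 \<and> x \<noteq> p \<and> x \<noteq> q \<longrightarrow> chain_label lt m x \<le> int m)))"

lemma chain_label_inv_Suc:
  assumes inv: "chain_label_inv lt m"
  shows "chain_label_inv lt (Suc m)"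
proof -
  define p where "p = fst (top_pair lt m)"
  define q where "q = snd (top_pair lt m)"
  define z where "z = int m + 3"
  have I: "p \<noteq> q" "p \<in> {1..int m + 2}" "q \<in> {1..int m + 2}"
    "\<And>x. x \<ge> int m + 3 \<Longrightarrow> chain_label lt m x = x - 1"
    "\<And>x. x = p \<or> x = q \<Longrightarrow> chain_label lt m x = int m + 1"
    "\<And>x. 1 \<le> x \<Longrightarrow> x \<le> int m + 2 \<Longrightarrow> x \<noteq> p \<Longrightarrow> x \<noteq> q \<Longrightarrow> chain_label lt m x \<le> int m"
    using inv unfolding chain_label_inv_def Let_def p_def q_def by auto
  have kp: "{kept lt p q z, promoted lt p q z} = {p, q}" "kept lt p q z \<noteq> promoted lt p q z"
    using kept_promoted[OF I(1)] by auto
  then have promoted_pq: "promoted lt p q z \<in> {p, q}" and kept_pq: "kept lt p q z \<in> {p, q}"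
    by blast+
  have top: "top_pair lt (Suc m) = (promoted lt p q z, z)"
    by (simp add: p_def q_def z_def)
  have label: "chain_label lt (Suc m) x =
      (if chain_label lt m x = int m + 1 \<or> chain_label lt m x = int m + 2 then
         (if x = kept lt p q z then int m + 1 else int m + 2) else chain_label lt m x)" for x
    by (simp add: p_def q_def z_def)
  show ?thesis unfolding chain_label_inv_def Let_def top fst_conv snd_conv
  proof (intro conjI allI impI)
    show "promoted lt p q z \<noteq> z" "promoted lt p q z \<in> {1..int (Suc m) + 2}"
      "z \<in> {1..int (Suc m) + 2}"
      using promoted_pq I(1-3) unfolding z_def by auto
  next
    fix x :: int assume "int (Suc m) + 3 \<le> x"
    then show "chain_label lt (Suc m) x = x - 1"
      using I(4)[of x] by (simp del: chain_label.simps add: label)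
  next
    fix x :: int assume "x = promoted lt p q z \<or> x = z"
    then show "chain_label lt (Suc m) x = int (Suc m) + 1"
    proof
      assume "x = promoted lt p q z"
      then have "x = p \<or> x = q" "x \<noteq> kept lt p q z" using kp by auto
      then show ?thesis using I(5)[of x] by (simp del: chain_label.simps add: label)
    next
      assume "x = z"
      then have "x \<noteq> kept lt p q z" using kept_pq I(2,3) unfolding z_def by auto
      then show ?thesis using I(4)[of x] \<open>x = z\<close> by (simp del: chain_label.simps add: label z_def)
    qed
  next
    fix x :: int assume x: "1 \<le> x \<and> x \<le> int (Suc m) + 2 \<and> x \<noteq> promoted lt p q z \<and> x \<noteq> z"
    show "chain_label lt (Suc m) x \<le> int (Suc m)"
    proof (cases "x = p \<or> x = q")
      case True
      then have "x = kept lt p q z" using kp x by auto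
      then show ?thesis using I(5)[of x] True by (simp del: chain_label.simps add: label)
    next
      case False
      then have "x \<le> int m + 2" using x unfolding z_def by auto
      then show ?thesis using I(6)[of x] x False by (simp del: chain_label.simps add: label)
    qed
  qed
qed

lemma chain_label_inv_holds: "chain_label_inv lt m"
proof (induction m)
  case 0
  show ?case by (auto simp: chain_label_inv_def)
next
  case (Suc m)
  then show ?case by (rule chain_label_inv_Suc)
qed

lemma chain_label_facts:
  fixes lt :: "int \<Rightarrow> int \<Rightarrow> bool" and m :: nat and x :: int
  defines "p \<equiv> fst (top_pair lt m)" and "q \<equiv> snd (top_pair lt m)"
  shows "p \<noteq> q" "p \<in> {1..int m + 2}" "q \<in> {1..int m + 2}"
    "x \<ge> int m + 3 \<Longrightarrow> chain_label lt m x = x - 1"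
    "x = p \<or> x = q \<Longrightarrow> chain_label lt m x = int m + 1"
    "1 \<le> x \<Longrightarrow> x \<le> int m + 2 \<Longrightarrow> x \<noteq> p \<Longrightarrow> x \<noteq> q \<Longrightarrow> chain_label lt m x \<le> int m"
  using chain_label_inv_holds[of lt m] unfolding chain_label_inv_def Let_def p_def q_def
  by auto

lemma replace_sub_map:
  "replace_sub P (map f u) (map g (filter (\<lambda>x. P (f x)) u)) =
   map (\<lambda>x. if P (f x) then g x else f x) u"
  by (induction u) auto

lemma sigma_pat_on_triple:
  assumes d: "distinct [l1, l2, l3]" and s: "{l1, l2, l3} = {p, q, z}"
    and lt: "lt l1 l2" "lt l2 l3" "lt l1 l3" "\<not> lt l2 l1" "\<not> lt l3 l2" "\<not> lt l3 l1"
    and f: "f p = a" "f q = a" "f z = a + 1"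
    and g: "\<And>x. x \<in> {p, q, z} \<Longrightarrow> g x = (if x = kept lt p q z then a else a + 1)"
  shows "sigma_pat a (a + 1) [f l1, f l2, f l3] = [g l1, g l2, g l3]"
proof -
  have "card (set [l1, l2, l3]) = 3" using d by (simp only: distinct_card) simp
  then have "card {p, q, z} = 3" using s by simp
  then have pqz: "p \<noteq> q" "p \<noteq> z" "q \<noteq> z"
    by (auto simp: card_insert_if split: if_splits)
  have "l1 \<in> {p, q, z}" "l2 \<in> {p, q, z}" "l3 \<in> {p, q, z}"
    "p \<in> {l1, l2, l3}" "q \<in> {l1, l2, l3}" "z \<in> {l1, l2, l3}"
    using s by blast+
  then have "(l1 = p \<and> l2 = q \<and> l3 = z) \<or> (l1 = p \<and> l2 = z \<and> l3 = q) \<or> (l1 = q \<and> l2 = p \<and> l3 = z) \<or>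
        (l1 = q \<and> l2 = z \<and> l3 = p) \<or> (l1 = z \<and> l2 = p \<and> l3 = q) \<or> (l1 = z \<and> l2 = q \<and> l3 = p)"
    using d pqz by auto
  then show ?thesis
    using lt pqz by (elim disjE) (auto simp: f g sigma_pat_def kept_def between_def)
qed

lemma chain_label_top_iff:
  assumes "1 \<le> x"
  shows "chain_label lt m x = int m + 1 \<or> chain_label lt m x = int m + 2 \<longleftrightarrow>
    x = fst (top_pair lt m) \<or> x = snd (top_pair lt m) \<or> x = int m + 3"
proof -
  consider "x \<ge> int m + 3" | "x = fst (top_pair lt m) \<or> x = snd (top_pair lt m)"
    | "x \<le> int m + 2" "x \<noteq> fst (top_pair lt m)" "x \<noteq> snd (top_pair lt m)"
    by linarith
  then show ?thesis
    using chain_label_facts(1-3)[where lt=lt and m=m] chain_label_facts(4-6)[where lt=lt and m=m and x=x] assms by cases auto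
qed

lemma chain_label_eq_top_iff:
  assumes x: "x \<in> {1..int n}" and n: "2 \<le> n"
  shows "chain_label lt (n - 2) x = int n - 1 \<longleftrightarrow>
    x = fst (top_pair lt (n - 2)) \<or> x = snd (top_pair lt (n - 2))"
proof
  have n2: "int (n - 2) = int n - 2" using n by (simp add: of_nat_diff)
  assume "chain_label lt (n - 2) x = int n - 1"
  moreover have "chain_label lt (n - 2) x \<le> int n - 2"
    if "x \<noteq> fst (top_pair lt (n - 2))" "x \<noteq> snd (top_pair lt (n - 2))"
    using chain_label_facts(6)[where lt = lt and m = "n - 2" and x = x] x that unfolding n2 by simp
  ultimately show "x = fst (top_pair lt (n - 2)) \<or> x = snd (top_pair lt (n - 2))" by fastforce
next
  have n2: "int (n - 2) = int n - 2" using n by (simp add: of_nat_diff)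
  assume "x = fst (top_pair lt (n - 2)) \<or> x = snd (top_pair lt (n - 2))"
  then show "chain_label lt (n - 2) x = int n - 1"
    using chain_label_facts(5)[where lt = lt and m = "n - 2" and x = x] unfolding n2 by simp
qed

lemma sigma_op_chain_label:
  assumes du: "distinct u" and pos: "\<forall>x\<in>set u. 1 \<le> x"
    and mem: "{fst (top_pair lt m), snd (top_pair lt m), int m + 3} \<subseteq> set u"
    and lt: "lt = (\<lambda>x y. precedes x y u)"
  shows "sigma_op (int (Suc m)) (map (chain_label lt m) u) = map (chain_label lt (Suc m)) u"
proof -
  define p where "p = fst (top_pair lt m)"
  define q where "q = snd (top_pair lt m)"
  define z where "z = int m + 3"
  define a where "a = int (Suc m)"
  define P where "P = (\<lambda>y. y = int m + 1 \<or> y = int m + 2)"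
  have P_eq: "(\<lambda>y. y = a \<or> y = a + 1) = P" by (auto simp: P_def a_def)
  define L where "L = filter (\<lambda>x. P (chain_label lt m x)) u"
  have "P (chain_label lt m x) \<longleftrightarrow> x = p \<or> x = q \<or> x = z" if "x \<in> set u" for x
    using chain_label_top_iff[where x=x and lt=lt and m=m] pos that unfolding P_def p_def q_def z_def by simp
  then have L_eq: "L = filter (\<lambda>x. x = p \<or> x = q \<or> x = z) u"
    unfolding L_def by (rule filter_cong[OF refl])
  have pqz: "p \<noteq> q" "p \<noteq> z" "q \<noteq> z"
    using chain_label_facts(1-3)[where lt=lt and m=m] unfolding p_def q_def z_def by auto
  have dL: "distinct L" and sL: "set L = {p, q, z}"
    using du mem by (auto simp: L_eq p_def q_def z_def)
  then have "length L = 3" using distinct_card[OF dL] pqz by simp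
  then obtain l1 l2 l3 where L3: "L = [l1, l2, l3]"
    by (cases L; cases "tl L"; cases "tl (tl L)") (auto simp: numeral_3_eq_3)
  have "precedes l1 l2 L" "precedes l2 l3 L" "precedes l1 l3 L"
    by (auto simp: L3 precedes_Cons)
  then have ord: "lt l1 l2" "lt l2 l3" "lt l1 l3"
    unfolding lt L_def by (auto dest: precedes_filterD)
  then have "\<not> lt l2 l1" "\<not> lt l3 l2" "\<not> lt l3 l1"
    using precedes_asym[OF du] unfolding lt by auto
  moreover have f: "chain_label lt m p = a" "chain_label lt m q = a" "chain_label lt m z = a + 1"
    using chain_label_facts(4,5)[where lt=lt and m=m] by (auto simp: a_def z_def p_def q_def)
  moreover have "chain_label lt (Suc m) x = (if x = kept lt p q z then a else a + 1)"
    if "x \<in> {p, q, z}" for x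
    using that f by (auto simp: a_def z_def p_def q_def)
  ultimately have key: "sigma_pat a (a + 1) (map (chain_label lt m) L) = map (chain_label lt (Suc m)) L"
    using sigma_pat_on_triple[of l1 l2 l3 p q z lt "chain_label lt m" a "chain_label lt (Suc m)"]
      dL sL ord by (simp add: L3)
  have "sigma_op a (map (chain_label lt m) u) =
        replace_sub P (map (chain_label lt m) u) (sigma_pat a (a + 1) (map (chain_label lt m) L))"
    by (simp add: sigma_op_def Let_def P_eq L_def filter_map comp_def)
  also have "\<dots> = replace_sub P (map (chain_label lt m) u) (map (chain_label lt (Suc m)) L)"
    by (simp only: key)
  also have "\<dots> = map (\<lambda>x. if P (chain_label lt m x) then chain_label lt (Suc m) x else chain_label lt m x) u"
    unfolding L_def by (rule replace_sub_map)
  also have "\<dots> = map (chain_label lt (Suc m)) u"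
    by (auto simp: P_def a_def)
  finally show ?thesis by (simp add: a_def)
qed

lemma sigma_chain_eq_chain_label:
  assumes du: "distinct u" and su: "set u = {1..int n}" and n: "2 \<le> n"
  shows "sigma_chain n (r_op 0 1 1 1 (tau_m1 u)) = map (chain_label (\<lambda>x y. precedes x y u) (n - 2)) u"
proof -
  define lt where "lt = (\<lambda>x y. precedes x y u)"
  have "fold (\<lambda>a v. sigma_op (int a) v) [1..<Suc m] (map (chain_label lt 0) u) = map (chain_label lt m) u"
    if "m \<le> n - 2" for m
    using that
  proof (induction m)
    case (Suc m)
    have "{fst (top_pair lt m), snd (top_pair lt m), int m + 3} \<subseteq> set u"
      using chain_label_facts(2,3)[where lt=lt and m=m] Suc.prems su by auto
    then have "sigma_op (int (Suc m)) (map (chain_label lt m) u) = map (chain_label lt (Suc m)) u"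
      by (intro sigma_op_chain_label[OF du]) (auto simp: su lt_def)
    then show ?case using Suc by simp
  qed simp
  moreover have "[1..<n - 1] = [1..<Suc (n - 2)]"
    using n by (simp add: Suc_diff_Suc numeral_2_eq_2)
  moreover have "r_op 0 1 1 1 (tau_m1 u) = map (chain_label lt 0) u"
    by (auto simp: r_op_def tau_m1_def)
  ultimately show ?thesis by (simp add: sigma_chain_def lt_def)
qed

lemma chain_label_cong:
  assumes "\<forall>m<K. \<forall>x\<in>{fst (top_pair lt m), snd (top_pair lt m), int m + 3}.
      \<forall>y\<in>{fst (top_pair lt m), snd (top_pair lt m), int m + 3}. lt x y = lt' x y"
  shows "m \<le> K \<Longrightarrow> top_pair lt m = top_pair lt' m \<and> chain_label lt m = chain_label lt' m"
proof (induction m)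
  case (Suc m)
  then have IH: "top_pair lt m = top_pair lt' m" "chain_label lt m = chain_label lt' m" by auto
  let ?p = "fst (top_pair lt m)" and ?q = "snd (top_pair lt m)"
  have "kept lt ?p ?q (int m + 3) = kept lt' ?p ?q (int m + 3)"
       "promoted lt ?p ?q (int m + 3) = promoted lt' ?p ?q (int m + 3)"
    using assms Suc.prems by (auto simp: kept_def promoted_def between_def)
  then show ?case using IH by (auto simp: fun_eq_iff)
qed (auto simp: fun_eq_iff)

lemma chain_label_cong_range:
  assumes agree: "\<forall>x\<in>{1..int n}. \<forall>y\<in>{1..int n}. lt x y = lt' x y" and m: "m \<le> n - 2"
  shows "chain_label lt m = chain_label lt' m"
proof -
  have "\<forall>k<n - 2. \<forall>x\<in>{fst (top_pair lt k), snd (top_pair lt k), int k + 3}.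
      \<forall>y\<in>{fst (top_pair lt k), snd (top_pair lt k), int k + 3}. lt x y = lt' x y"
  proof (intro allI impI)
    fix k assume "k < n - 2"
    then have "{fst (top_pair lt k), snd (top_pair lt k), int k + 3} \<subseteq> {1..int n}"
      using chain_label_facts(2,3)[where lt=lt and m=k] by auto
    then show "\<forall>x\<in>{fst (top_pair lt k), snd (top_pair lt k), int k + 3}.
      \<forall>y\<in>{fst (top_pair lt k), snd (top_pair lt k), int k + 3}. lt x y = lt' x y"
      using agree by blast
  qed
  then show ?thesis using chain_label_cong m by blast
qed

section \<open>Two reading orders on the cells of a standard tableau\<close>

definition col_order :: "(int \<Rightarrow> nat) \<Rightarrow> (int \<Rightarrow> nat) \<Rightarrow> int \<Rightarrow> int \<Rightarrow> bool" where
  "col_order row col x y \<longleftrightarrow> col y < col x \<or> (col x = col y \<and> row x < row y)"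

definition row_order :: "(int \<Rightarrow> nat) \<Rightarrow> (int \<Rightarrow> nat) \<Rightarrow> int \<Rightarrow> int \<Rightarrow> bool" where
  "row_order row col x y \<longleftrightarrow> row x < row y \<or> (row x = row y \<and> col y < col x)"

lemma col_order_eq_row_order:
  assumes "row x \<noteq> row y \<or> col x \<noteq> col y"
    and "\<not> (row x < row y \<and> col x < col y)" and "\<not> (row y < row x \<and> col y < col x)"
  shows "col_order row col x y = row_order row col x y"
  using assms unfolding col_order_def row_order_def by auto

text \<open>The letters \<open>p\<close> and \<open>q\<close> sit in two outer corners of the subtableau of letters
  \<open>\<le> m + 2\<close>, the higher one weakly to the left of the lower one.\<close>

definition corner_pair :: "(int \<Rightarrow> nat) \<Rightarrow> (int \<Rightarrow> nat) \<Rightarrow> nat \<Rightarrow> int \<Rightarrow> int \<Rightarrow> bool" where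
  "corner_pair row col m p q \<longleftrightarrow> p \<noteq> q \<and> p \<in> {1..int m + 2} \<and> q \<in> {1..int m + 2} \<and>
     row p \<noteq> row q \<and> (row q < row p \<longrightarrow> col p \<le> col q) \<and> (row p < row q \<longrightarrow> col q \<le> col p) \<and>
     (\<forall>y\<in>{1..int m + 2}. y \<noteq> p \<longrightarrow> y \<noteq> q \<longrightarrow>
        \<not> (row p \<le> row y \<and> col p \<le> col y) \<and> \<not> (row q \<le> row y \<and> col q \<le> col y))"

lemma corner_pair_maximal:
  "corner_pair row col m p q \<Longrightarrow> y \<in> {1..int m + 2} \<Longrightarrow> x = p \<or> x = q \<Longrightarrow>
   row x \<le> row y \<Longrightarrow> col x \<le> col y \<Longrightarrow> y = p \<or> y = q"
  unfolding corner_pair_def by blast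

lemma corner_pair_sym: "corner_pair row col m p q \<longleftrightarrow> corner_pair row col m q p"
  unfolding corner_pair_def by auto

locale cell_placement =
  fixes row col :: "int \<Rightarrow> nat" and n :: nat
  assumes cell_inj:
      "x \<in> {1..int n} \<Longrightarrow> y \<in> {1..int n} \<Longrightarrow> row x = row y \<Longrightarrow> col x = col y \<Longrightarrow> x = y"
    and cell_mono:
      "x \<in> {1..int n} \<Longrightarrow> y \<in> {1..int n} \<Longrightarrow> row x \<le> row y \<Longrightarrow> col x \<le> col y \<Longrightarrow> x \<le> y"
    and cells_down_closed:
      "y \<in> {1..int n} \<Longrightarrow> r \<le> row y \<Longrightarrow> c \<le> col y \<Longrightarrow> \<exists>x\<in>{1..int n}. row x = r \<and> col x = c"
begin

lemma corner_pair_initial: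
  assumes n: "2 \<le> n" and ord: "row_order row col 1 2"
  shows "corner_pair row col 0 1 2"
proof -
  have r1: "(1::int) \<in> {1..int n}" and r2: "(2::int) \<in> {1..int n}" using n by auto
  have rows: "row 1 < row 2"
  proof (rule ccontr)
    assume "\<not> row 1 < row 2"
    then have "(2::int) \<le> 1" using ord cell_mono[OF r2 r1] unfolding row_order_def by auto
    then show False by simp
  qed
  have "col 2 \<le> col 1"
  proof (rule ccontr)
    assume cols: "\<not> col 2 \<le> col 1"
    then obtain w where w: "w \<in> {1..int n}" "row w = row 1" "col w = col 2"
      using cells_down_closed[OF r2, of "row 1" "col 2"] rows by auto
    then have "w \<le> 2" using cell_mono[OF w(1) r2] rows by auto
    moreover have "w \<noteq> 2" "w \<noteq> 1" using w rows cols by auto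
    ultimately show False using w(1) by auto
  qed
  then show ?thesis unfolding corner_pair_def using rows by auto
qed

lemma not_weakly_SW_of_smaller:
  assumes "y \<in> {1..int n}" "z \<in> {1..int n}" "y < z"
  shows "\<not> (row z \<le> row y \<and> col z \<le> col y)"
  using cell_mono[of z y] assms by auto

text \<open>Otherwise the cells in the row of \<open>W\<close> and the column of \<open>m + 3\<close>, and in the row of
  \<open>m + 3\<close> and the column of \<open>W\<close>, would hold two distinct letters \<open>\<le> m + 2\<close> weakly
  north-east of \<open>W\<close>, but only the partner of \<open>W\<close> may be such a letter.\<close>

lemma corner_not_SW_of_next:
  assumes G: "corner_pair row col m p q" and zn: "int m + 3 \<le> int n" and W: "W = p \<or> W = q"
  shows "\<not> (row W < row (int m + 3) \<and> col W < col (int m + 3))"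
proof
  define z where "z = int m + 3"
  assume NE: "row W < row (int m + 3) \<and> col W < col (int m + 3)"
  have zr: "z \<in> {1..int n}" using zn unfolding z_def by auto
  have other_corner: "x = p \<or> x = q"
    if x: "x \<in> {1..int n}" "row x \<le> row z" "col x \<le> col z" "x \<noteq> z"
      "row W \<le> row x" "col W \<le> col x" for x
  proof -
    have "x \<le> z" using cell_mono[OF x(1) zr] x(2,3) .
    then have "x \<in> {1..int m + 2}" using x(1,4) unfolding z_def by auto
    then show ?thesis using corner_pair_maximal[OF G _ W] x(5,6) by blast
  qed
  obtain x1 where x1: "x1 \<in> {1..int n}" "row x1 = row W" "col x1 = col z"
    using cells_down_closed[OF zr, of "row W" "col z"] NE unfolding z_def by auto
  obtain x2 where x2: "x2 \<in> {1..int n}" "row x2 = row z" "col x2 = col W"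
    using cells_down_closed[OF zr, of "row z" "col W"] NE unfolding z_def by auto
  have ne: "x1 \<noteq> z" "x2 \<noteq> z" "x1 \<noteq> W" "x2 \<noteq> W" "x1 \<noteq> x2"
    using x1 x2 NE unfolding z_def by auto
  have "x1 = p \<or> x1 = q" using other_corner[OF x1(1) _ _ ne(1)] x1 NE unfolding z_def by auto
  moreover have "x2 = p \<or> x2 = q" using other_corner[OF x2(1) _ _ ne(2)] x2 NE unfolding z_def by auto
  ultimately show False using W ne by metis
qed

lemma promoted_row_order:
  assumes "{p, q} = {X, Y}" "row Y < row X"
  shows "promoted (row_order row col) p q z = (if between (row_order row col) Y z X then Y else X)"
proof -
  have ord: "\<not> row_order row col X Y" "row_order row col Y X"
    using assms(2) unfolding row_order_def by auto
  have btw: "between (row_order row col) X z Y = between (row_order row col) Y z X"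
    unfolding between_def by blast
  from assms(1) consider "p = X" "q = Y" | "p = Y" "q = X" unfolding doubleton_eq_iff by blast
  then show ?thesis by cases (simp_all add: promoted_def ord btw)
qed

lemma between_row_order:
  assumes "row Y < row X"
  shows "between (row_order row col) Y z X \<longleftrightarrow> row_order row col Y z \<and> row_order row col z X"
proof -
  have "\<not> (row_order row col X z \<and> row_order row col z Y)"
  proof
    assume "row_order row col X z \<and> row_order row col z Y"
    then have "row X \<le> row z" "row z \<le> row Y" unfolding row_order_def by auto
    then show False using assms by simp
  qed
  then show ?thesis unfolding between_def by blast
qed

lemma row_promoted_ne_row_next:
  assumes G: "corner_pair row col m X Y" and YX: "row Y < row X" and zn: "int m + 3 \<le> int n"
  shows "row (if between (row_order row col) Y (int m + 3) X then Y else X) \<noteq> row (int m + 3)"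
proof -
  define z where "z = int m + 3"
  have range: "X \<in> {1..int n}" "Y \<in> {1..int n}" "z \<in> {1..int n}" "X < z" "Y < z"
    using G zn unfolding corner_pair_def z_def by auto
  have colX: "col X < col z" if "row X = row z"
    using not_weakly_SW_of_smaller[of X z] range that by auto
  have colY: "col Y < col z" if "row Y = row z"
    using not_weakly_SW_of_smaller[of Y z] range that by auto
  show ?thesis
  proof (cases "between (row_order row col) Y z X")
    case True
    then have "row_order row col Y z" using between_row_order[OF YX] by blast
    then have "row Y \<noteq> row z" using colY unfolding row_order_def by auto
    then show ?thesis using True unfolding z_def by simp
  next
    case False
    have "row X \<noteq> row z"
    proof
      assume "row X = row z"
      then have "row_order row col Y z" "row_order row col z X"
        using colX YX unfolding row_order_def by auto
      then show False using False between_row_order[OF YX] by blast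
    qed
    then show ?thesis using False unfolding z_def by simp
  qed
qed

lemma between_imp_col_less:
  assumes G: "corner_pair row col m X Y" and YX: "row Y < row X" and zn: "int m + 3 \<le> int n"
    and btw: "between (row_order row col) Y (int m + 3) X"
  shows "col X < col Y"
proof (rule ccontr)
  define z where "z = int m + 3"
  assume "\<not> col X < col Y"
  then have cXY: "col X = col Y" using G YX unfolding corner_pair_def by auto
  have range: "X \<in> {1..int n}" "Y \<in> {1..int n}" "z \<in> {1..int n}" "X < z" "Y < z"
    using G zn unfolding corner_pair_def z_def by auto
  have ord: "row_order row col Y z" "row_order row col z X"
    using btw between_row_order[OF YX] unfolding z_def by auto
  have notSW: "\<not> (row Y < row z \<and> col Y < col z)"
    using corner_not_SW_of_next[OF G zn] unfolding z_def by auto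
  consider "row z = row Y" | "row z = row X" | "row Y < row z" "row z < row X"
    using ord unfolding row_order_def by linarith
  then show False
  proof cases
    case 1
    then show False using ord(1) not_weakly_SW_of_smaller[of Y z] range unfolding row_order_def by auto
  next
    case 2
    then show False using ord(2) cXY YX notSW unfolding row_order_def by auto
  next
    case 3
    then have "col z \<le> col Y" using notSW by auto
    then obtain w where w: "w \<in> {1..int n}" "row w = row z" "col w = col Y"
      using cells_down_closed[OF range(1), of "row z" "col Y"] 3 cXY by auto
    have "w \<le> X" using cell_mono[OF w(1) range(1)] w 3 cXY by auto
    then have "w \<in> {1..int m + 2}" using w range G unfolding corner_pair_def by auto
    moreover have "w \<noteq> X" "w \<noteq> Y" using w 3 by auto
    ultimately show False using corner_pair_maximal[OF G _, of w Y] w 3 by auto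
  qed
qed

lemma corner_pair_step_oriented:
  assumes G: "corner_pair row col m X Y" and YX: "row Y < row X" and zn: "int m + 3 \<le> int n"
  shows "corner_pair row col (Suc m)
           (if between (row_order row col) Y (int m + 3) X then Y else X) (int m + 3)"
proof -
  define z where "z = int m + 3"
  define Ob where "Ob = (if between (row_order row col) Y z X then Y else X)"
  have XY: "X \<noteq> Y" "X \<in> {1..int m + 2}" "Y \<in> {1..int m + 2}"
    using G unfolding corner_pair_def by auto
  have zr: "z \<in> {1..int n}" using zn unfolding z_def by auto
  have Ob: "Ob = X \<or> Ob = Y" "Ob \<in> {1..int n}" "Ob < z"
    using XY zn unfolding Ob_def z_def by auto
  show ?thesis
    unfolding z_def[symmetric] Ob_def[symmetric] corner_pair_def
  proof (intro conjI ballI impI)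
    show "Ob \<noteq> z" "Ob \<in> {1..int (Suc m) + 2}" "z \<in> {1..int (Suc m) + 2}"
      using Ob XY unfolding z_def by auto
    show "row Ob \<noteq> row z"
      using row_promoted_ne_row_next[OF G YX zn] unfolding Ob_def z_def .
    show "row z < row Ob \<Longrightarrow> col Ob \<le> col z" "row Ob < row z \<Longrightarrow> col z \<le> col Ob"
      using not_weakly_SW_of_smaller[OF Ob(2) zr Ob(3)] corner_not_SW_of_next[OF G zn Ob(1)]
      unfolding z_def by auto
  next
    fix y assume y: "y \<in> {1..int (Suc m) + 2}" "y \<noteq> Ob" "y \<noteq> z"
    then have yr: "y \<in> {1..int n}" "y < z" using zn unfolding z_def by auto
    show "\<not> (row z \<le> row y \<and> col z \<le> col y)" using not_weakly_SW_of_smaller[OF yr(1) zr yr(2)] .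
    show "\<not> (row Ob \<le> row y \<and> col Ob \<le> col y)"
    proof (cases "y = X \<or> y = Y")
      case True
      show ?thesis
      proof (cases "between (row_order row col) Y z X")
        case btw: True
        then have "Ob = Y" "y = X" using True y(2) unfolding Ob_def by auto
        then show ?thesis using between_imp_col_less[OF G YX zn] btw unfolding z_def by auto
      next
        case False
        then have "Ob = X" "y = Y" using True y(2) unfolding Ob_def by auto
        then show ?thesis using YX by auto
      qed
    next
      case False
      then have "y \<in> {1..int m + 2}" using y yr unfolding z_def by auto
      then show ?thesis using corner_pair_maximal[OF G _ Ob(1)] False by blast
    qed
  qed
qed

lemma corner_pair_step:
  assumes G: "corner_pair row col m p q" and zn: "int m + 3 \<le> int n"
  shows "corner_pair row col (Suc m) (promoted (row_order row col) p q (int m + 3)) (int m + 3)"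
proof -
  obtain X Y where XY: "{p, q} = {X, Y}" "row Y < row X" and GXY: "corner_pair row col m X Y"
  proof (cases "row q < row p")
    case True
    then show ?thesis using that G by blast
  next
    case False
    then have "row p < row q" using G unfolding corner_pair_def by auto
    then show ?thesis using that[of q p] G corner_pair_sym by blast
  qed
  then show ?thesis
    using corner_pair_step_oriented[OF GXY XY(2) zn] promoted_row_order[OF XY] by simp
qed

lemma col_order_eq_row_order_on_step:
  assumes G: "corner_pair row col m p q" and zn: "int m + 3 \<le> int n"
    and x: "x \<in> {p, q, int m + 3}" and y: "y \<in> {p, q, int m + 3}"
  shows "col_order row col x y = row_order row col x y"
proof (cases "x = y")
  case False
  define z where "z = int m + 3"
  have range: "p \<in> {1..int n}" "q \<in> {1..int n}" "z \<in> {1..int n}" "p < z" "q < z"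
    using G zn unfolding corner_pair_def z_def by auto
  have "\<not> (row p < row q \<and> col p < col q)" "\<not> (row q < row p \<and> col q < col p)"
    using G unfolding corner_pair_def by auto
  moreover have "\<not> (row p < row z \<and> col p < col z)" "\<not> (row q < row z \<and> col q < col z)"
    using corner_not_SW_of_next[OF G zn] unfolding z_def by auto
  moreover have "\<not> (row z < row p \<and> col z < col p)" "\<not> (row z < row q \<and> col z < col q)"
    using not_weakly_SW_of_smaller[of p z] not_weakly_SW_of_smaller[of q z] range by auto
  ultimately have "\<not> (row x < row y \<and> col x < col y)" "\<not> (row y < row x \<and> col y < col x)"
    using x y unfolding z_def[symmetric] by auto
  moreover have "row x \<noteq> row y \<or> col x \<noteq> col y"
    using cell_inj[of x y] x y range False unfolding z_def[symmetric] by auto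
  ultimately show ?thesis using col_order_eq_row_order by blast
qed (simp add: col_order_def row_order_def)

lemma corner_pair_top_pair:
  assumes G0: "corner_pair row col 0 1 2" and m: "m \<le> n - 2"
  shows "corner_pair row col m (fst (top_pair (row_order row col) m)) (snd (top_pair (row_order row col) m))"
  using m
proof (induction m)
  case (Suc m)
  then show ?case using corner_pair_step[of m] by auto
qed (simp add: G0)

lemma chain_label_col_order_eq_row_order:
  assumes G0: "corner_pair row col 0 1 2"
  shows "chain_label (col_order row col) (n - 2) = chain_label (row_order row col) (n - 2)"
proof -
  let ?top = "top_pair (row_order row col)"
  have "\<forall>m<n - 2. \<forall>x\<in>{fst (?top m), snd (?top m), int m + 3}.
      \<forall>y\<in>{fst (?top m), snd (?top m), int m + 3}. row_order row col x y = col_order row col x y"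
  proof (intro allI impI ballI)
    fix m x y assume m: "m < n - 2"
      and xy: "x \<in> {fst (?top m), snd (?top m), int m + 3}" "y \<in> {fst (?top m), snd (?top m), int m + 3}"
    have "corner_pair row col m (fst (?top m)) (snd (?top m))"
      using corner_pair_top_pair[OF G0] m by simp
    moreover have "int m + 3 \<le> int n" using m by linarith
    ultimately show "row_order row col x y = col_order row col x y"
      using col_order_eq_row_order_on_step xy by metis
  qed
  from chain_label_cong[OF this, of "n - 2"] show ?thesis by simp
qed

end

definition at_cell :: "int list list \<Rightarrow> int \<Rightarrow> nat \<Rightarrow> nat \<Rightarrow> bool" where
  "at_cell M x i j \<longleftrightarrow> i < length M \<and> j < length (M ! i) \<and> M ! i ! j = x"

lemma at_cell_Cons:
  "at_cell (r # M) x i j \<longleftrightarrow> (if i = 0 then j < length r \<and> r ! j = x else at_cell M x (i - 1) j)"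
  by (cases i) (auto simp: at_cell_def)

lemma mem_concat_iff_at_cell: "x \<in> set (concat M) \<longleftrightarrow> (\<exists>i j. at_cell M x i j)"
proof
  assume "x \<in> set (concat M)"
  then obtain r where "r \<in> set M" "x \<in> set r" by auto
  then obtain i j where "i < length M" "M ! i = r" "j < length r" "r ! j = x"
    by (auto simp: in_set_conv_nth)
  then show "\<exists>i j. at_cell M x i j" by (auto simp: at_cell_def)
next
  assume "\<exists>i j. at_cell M x i j"
  then obtain i j where "at_cell M x i j" by blast
  then have "M ! i \<in> set M" "x \<in> set (M ! i)" by (auto simp: at_cell_def)
  then show "x \<in> set (concat M)" by auto
qed

lemma precedes_concat:
  "precedes x y (concat M) \<longleftrightarrow>
   (\<exists>i j i' j'. at_cell M x i j \<and> at_cell M y i' j' \<and> (i < i' \<or> i = i' \<and> j < j'))"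
proof (induction M)
  case (Cons r M)
  show ?case
  proof
    assume "precedes x y (concat (r # M))"
    then consider "precedes x y r" | "precedes x y (concat M)" | "x \<in> set r" "y \<in> set (concat M)"
      by (auto simp: precedes_append)
    then show "\<exists>i j i' j'. at_cell (r # M) x i j \<and> at_cell (r # M) y i' j' \<and> (i < i' \<or> i = i' \<and> j < j')"
    proof cases
      case 1
      then obtain j j' where "j < j'" "j' < length r" "r ! j = x" "r ! j' = y"
        by (auto simp: precedes_def)
      then show ?thesis by (intro exI[of _ 0] exI[of _ j] exI[of _ 0] exI[of _ j']) (auto simp: at_cell_Cons)
    next
      case 2
      then obtain i j i' j' where "at_cell M x i j" "at_cell M y i' j'" "i < i' \<or> i = i' \<and> j < j'"
        using Cons.IH by blast
      then show ?thesis
        by (intro exI[of _ "Suc i"] exI[of _ j] exI[of _ "Suc i'"] exI[of _ j']) (auto simp: at_cell_Cons)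
    next
      case 3
      then obtain j where "j < length r" "r ! j = x" by (auto simp: in_set_conv_nth)
      moreover obtain i' j' where "at_cell M y i' j'" using 3 mem_concat_iff_at_cell by blast
      ultimately show ?thesis
        by (intro exI[of _ 0] exI[of _ j] exI[of _ "Suc i'"] exI[of _ j']) (auto simp: at_cell_Cons)
    qed
  next
    assume "\<exists>i j i' j'. at_cell (r # M) x i j \<and> at_cell (r # M) y i' j' \<and> (i < i' \<or> i = i' \<and> j < j')"
    then obtain i j i' j' where x: "at_cell (r # M) x i j" and y: "at_cell (r # M) y i' j'"
      and ord: "i < i' \<or> i = i' \<and> j < j'" by blast
    consider "i = 0" "i' = 0" | "i = 0" "i' \<noteq> 0" | "i \<noteq> 0" "i' \<noteq> 0" using ord by auto
    then have "precedes x y r \<or> precedes x y (concat M) \<or> (x \<in> set r \<and> y \<in> set (concat M))"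
    proof cases
      case 1
      then show ?thesis using x y ord by (auto simp: at_cell_Cons precedes_def)
    next
      case 2
      then show ?thesis using x y mem_concat_iff_at_cell[of y M] by (auto simp: at_cell_Cons)
    next
      case 3
      then have "at_cell M x (i - 1) j" "at_cell M y (i' - 1) j'" using x y by (auto simp: at_cell_Cons)
      then have "\<exists>i j i' j'. at_cell M x i j \<and> at_cell M y i' j' \<and> (i < i' \<or> i = i' \<and> j < j')"
        using ord 3 by (intro exI[of _ "i - 1"] exI[of _ j] exI[of _ "i' - 1"] exI[of _ j']) auto
      then show ?thesis using Cons.IH by simp
    qed
    then show "precedes x y (concat (r # M))" by (simp add: precedes_append)
  qed
qed (simp add: at_cell_def)

lemma at_cell_unique:
  "distinct (concat M) \<Longrightarrow> at_cell M x i j \<Longrightarrow> at_cell M x i' j' \<Longrightarrow> i = i' \<and> j = j'"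
proof (induction M arbitrary: i i')
  case (Cons r M)
  then have r: "distinct r" "distinct (concat M)" "set r \<inter> set (concat M) = {}" by auto
  consider "i = 0" "i' = 0" | "i = 0 \<longleftrightarrow> i' \<noteq> 0" | "i \<noteq> 0" "i' \<noteq> 0" by blast
  then show ?case
  proof cases
    case 1
    then show ?thesis using Cons.prems r(1) by (auto simp: at_cell_Cons nth_eq_iff_index_eq)
  next
    case 2
    then have "x \<in> set r" "x \<in> set (concat M)"
      using Cons.prems mem_concat_iff_at_cell[of x M] by (auto simp: at_cell_Cons split: if_splits)
    then show ?thesis using r(3) by auto
  next
    case 3
    then show ?thesis using Cons.prems Cons.IH[OF r(2), of "i - 1" "i' - 1"] by (auto simp: at_cell_Cons)
  qed
qed (simp add: at_cell_def)

lemma distinct_concat_if_at_cell_unique: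
  "(\<And>x i j i' j'. at_cell M x i j \<Longrightarrow> at_cell M x i' j' \<Longrightarrow> i = i' \<and> j = j') \<Longrightarrow> distinct (concat M)"
proof (induction M)
  case (Cons r M)
  note uniq = Cons.prems
  have "distinct r"
    unfolding distinct_conv_nth
  proof (intro allI impI)
    fix j j' assume "j < length r" "j' < length r" "j \<noteq> j'"
    then show "r ! j \<noteq> r ! j'" using uniq[of "r ! j" 0 j 0 j'] by (auto simp: at_cell_Cons)
  qed
  moreover have "distinct (concat M)"
  proof (rule Cons.IH)
    fix x i j i' j' assume "at_cell M x i j" "at_cell M x i' j'"
    then show "i = i' \<and> j = j'" using uniq[of x "Suc i" j "Suc i'" j'] by (simp add: at_cell_Cons)
  qed
  moreover have "set r \<inter> set (concat M) = {}"
  proof (rule ccontr)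
    assume "set r \<inter> set (concat M) \<noteq> {}"
    then obtain x where "x \<in> set r" "x \<in> set (concat M)" by auto
    moreover from \<open>x \<in> set r\<close> obtain j where "j < length r" "r ! j = x"
      by (auto simp: in_set_conv_nth)
    moreover from \<open>x \<in> set (concat M)\<close> obtain i' j' where "at_cell M x i' j'"
      using mem_concat_iff_at_cell by blast
    ultimately show False using uniq[of x 0 j "Suc i'" j'] by (auto simp: at_cell_Cons)
  qed
  ultimately show ?case by simp
qed simp

lemma at_cell_rev: "at_cell (rev M) x i j \<longleftrightarrow> i < length M \<and> at_cell M x (length M - Suc i) j"
  by (auto simp: at_cell_def rev_nth)

lemma less_length_takeWhile_iff:
  "j < length (takeWhile P xs) \<longleftrightarrow> j < length xs \<and> (\<forall>k\<le>j. P (xs ! k))"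
proof
  assume j: "j < length (takeWhile P xs)"
  have "P (xs ! k)" if "k \<le> j" for k
    using j that takeWhile_nth[of k P xs] nth_mem[of k "takeWhile P xs"] set_takeWhileD by fastforce
  then show "j < length xs \<and> (\<forall>k\<le>j. P (xs ! k))"
    using j length_takeWhile_le[of P xs] by auto
next
  assume "j < length xs \<and> (\<forall>k\<le>j. P (xs ! k))"
  then have "Suc j \<le> length (takeWhile P xs)"
    by (intro length_takeWhile_less_P_nth) auto
  then show "j < length (takeWhile P xs)" by simp
qed

lemma cell_in_lower_row:
  assumes "sorted (rev (map length M))" "i \<le> i'" "i' < length M" "j < length (M ! i')"
  shows "j < length (M ! i)"
  using sorted_rev_nth_mono[OF assms(1), of i i'] assms by simp

lemma cell_exists_transpose:
  assumes s: "sorted (rev (map length M))"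
  shows "i < length (transpose M) \<and> j < length (transpose M ! i) \<longleftrightarrow> j < length M \<and> i < length (M ! j)"
proof
  assume "i < length (transpose M) \<and> j < length (transpose M ! i)"
  then have "j < length (takeWhile (\<lambda>ys. i < length ys) M)"
    using nth_transpose filter_equals_takeWhile_sorted_rev[OF s] by (metis length_map)
  then show "j < length M \<and> i < length (M ! j)" by (simp add: less_length_takeWhile_iff)
next
  assume j: "j < length M \<and> i < length (M ! j)"
  then have i: "i < length (transpose M)"
    using cell_in_lower_row[OF s, of 0 j i] by (auto simp: length_transpose_sorted[OF s])
  have "j < length (takeWhile (\<lambda>ys. i < length ys) M)"
    using j cell_in_lower_row[OF s, of _ j i] by (auto simp: less_length_takeWhile_iff)
  then show "i < length (transpose M) \<and> j < length (transpose M ! i)"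
    using i nth_transpose[OF i] filter_equals_takeWhile_sorted_rev[OF s] by simp
qed

lemma at_cell_transpose:
  assumes s: "sorted (rev (map length M))"
  shows "at_cell (transpose M) x i j \<longleftrightarrow> at_cell M x j i"
proof (cases "i < length (transpose M) \<and> j < length (transpose M ! i)")
  case True
  then have i: "i < length (transpose M)" and "j < length (transpose M ! i)" by auto
  then have "j < length (filter (\<lambda>ys. i < length ys) M)" using nth_transpose[OF i] by simp
  then have "transpose M ! i ! j = M ! j ! i" using nth_nth_transpose_sorted[OF s i] by simp
  then show ?thesis using True cell_exists_transpose[OF s, of i j] unfolding at_cell_def by auto
next
  case False
  then show ?thesis using cell_exists_transpose[OF s] unfolding at_cell_def by blast
qed

lemma distinct_concat_transpose:
  fixes M :: "int list list"
  assumes s: "sorted (rev (map length M))"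
  shows "distinct (concat (transpose M)) \<longleftrightarrow> distinct (concat M)"
proof
  assume "distinct (concat (transpose M))"
  from at_cell_unique[OF this] show "distinct (concat M)"
    by (intro distinct_concat_if_at_cell_unique) (simp add: at_cell_transpose[OF s, symmetric])
next
  assume "distinct (concat M)"
  from at_cell_unique[OF this] show "distinct (concat (transpose M))"
    by (intro distinct_concat_if_at_cell_unique) (simp add: at_cell_transpose[OF s])
qed

lemma set_concat_transpose:
  fixes M :: "int list list"
  assumes "sorted (rev (map length M))"
  shows "set (concat (transpose M)) = set (concat M)"
proof -
  have "x \<in> set (concat (transpose M)) \<longleftrightarrow> x \<in> set (concat M)" for x
    unfolding mem_concat_iff_at_cell at_cell_transpose[OF assms] by blast
  then show ?thesis by blast
qed


section \<open>Deleting an upper set of cells commutes with transposition\<close>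

definition upper_closed :: "int \<Rightarrow> int list list \<Rightarrow> bool" where
  "upper_closed v N \<longleftrightarrow> (\<forall>i j i' j'. at_cell N v i j \<longrightarrow> i \<le> i' \<longrightarrow> j \<le> j' \<longrightarrow>
     i' < length N \<longrightarrow> j' < length (N ! i') \<longrightarrow> N ! i' ! j' = v)"

lemma upper_closedD:
  "upper_closed v N \<Longrightarrow> at_cell N v i j \<Longrightarrow> i \<le> i' \<Longrightarrow> j \<le> j' \<Longrightarrow>
   i' < length N \<Longrightarrow> j' < length (N ! i') \<Longrightarrow> N ! i' ! j' = v"
  unfolding upper_closed_def by blast

lemma at_cell_ext:
  assumes neA: "\<forall>r\<in>set A. r \<noteq> []" and neB: "\<forall>r\<in>set B. r \<noteq> []"
    and cells: "\<And>x i j. at_cell A x i j \<longleftrightarrow> at_cell B x i j"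
  shows "A = B"
proof -
  have "i < length A \<longleftrightarrow> i < length B" for i
  proof
    assume "i < length A"
    then have "at_cell A (A ! i ! 0) i 0" using neA by (auto simp: at_cell_def)
    then show "i < length B" using cells by (auto simp: at_cell_def)
  next
    assume "i < length B"
    then have "at_cell B (B ! i ! 0) i 0" using neB by (auto simp: at_cell_def)
    then show "i < length A" using cells by (auto simp: at_cell_def)
  qed
  then have len: "length A = length B" by (metis nat_neq_iff)
  show ?thesis
  proof (rule nth_equalityI[OF len])
    fix i assume i: "i < length A"
    have "j < length (A ! i) \<longleftrightarrow> j < length (B ! i)" for j
    proof
      assume "j < length (A ! i)"
      then have "at_cell A (A ! i ! j) i j" using i by (auto simp: at_cell_def)
      then show "j < length (B ! i)" using cells by (auto simp: at_cell_def)
    next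
      assume "j < length (B ! i)"
      then have "at_cell B (B ! i ! j) i j" using i len by (auto simp: at_cell_def)
      then show "j < length (A ! i)" using cells by (auto simp: at_cell_def)
    qed
    then have len_i: "length (A ! i) = length (B ! i)" by (metis nat_neq_iff)
    show "A ! i = B ! i"
    proof (rule nth_equalityI[OF len_i])
      fix j assume "j < length (A ! i)"
      then have "at_cell B (A ! i ! j) i j" using i cells by (auto simp: at_cell_def)
      then show "A ! i ! j = B ! i ! j" by (simp add: at_cell_def)
    qed
  qed
qed

lemma nonempty_rows_transpose: "r \<in> set (transpose M) \<Longrightarrow> r \<noteq> []"
proof -
  assume "r \<in> set (transpose M)"
  then obtain i where i: "i < length (transpose M)" "r = transpose M ! i"
    by (auto simp: in_set_conv_nth)
  have "\<exists>ys\<in>set M. i < length ys" if "i < foldr (\<lambda>xs. max (length xs)) M 0" for i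
    using that by (induction M) (auto simp: max_def split: if_splits)
  then obtain ys where "ys \<in> set M" "i < length ys" using i(1) by (auto simp: length_transpose)
  then show "r \<noteq> []" using i nth_transpose[OF i(1)] by (auto simp: filter_empty_conv)
qed

lemma filter_eq_takeWhile:
  "(\<And>j j'. j \<le> j' \<Longrightarrow> j' < length r \<Longrightarrow> \<not> P (r ! j) \<Longrightarrow> \<not> P (r ! j')) \<Longrightarrow> filter P r = takeWhile P r"
proof (induction r)
  case (Cons a r)
  show ?case
  proof (cases "P a")
    case True
    have "filter P r = takeWhile P r"
    proof (rule Cons.IH)
      fix j j' assume "j \<le> j'" "j' < length r" "\<not> P (r ! j)"
      then show "\<not> P (r ! j')" using Cons.prems[of "Suc j" "Suc j'"] by simp
    qed
    then show ?thesis using True by simp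
  next
    case False
    have "\<not> P x" if x: "x \<in> set r" for x
    proof -
      obtain k where "k < length r" "r ! k = x" using x by (auto simp: in_set_conv_nth)
      then show ?thesis using Cons.prems[of 0 "Suc k"] False by auto
    qed
    then show ?thesis using False by (simp add: filter_empty_conv)
  qed
qed simp

lemma R_op_eq_takeWhile:
  assumes ne: "\<forall>r\<in>set N. r \<noteq> []" and uc: "upper_closed v N"
  shows "R_op v N = takeWhile (\<lambda>r. r \<noteq> []) (map (takeWhile (\<lambda>x. x \<noteq> v)) N)"
proof -
  define L where "L = map (takeWhile (\<lambda>x. x \<noteq> v)) N"
  have "filter (\<lambda>x. x \<noteq> v) (N ! i) = takeWhile (\<lambda>x. x \<noteq> v) (N ! i)" if i: "i < length N" for i
    using i upper_closedD[OF uc, of i _ i] by (intro filter_eq_takeWhile) (auto simp: at_cell_def)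
  then have rows: "map (filter (\<lambda>x. x \<noteq> v)) N = L"
    unfolding L_def by (simp add: list_eq_iff_nth_eq)
  have L_Nil: "L ! k = [] \<longleftrightarrow> N ! k ! 0 = v" if "k < length N" for k
    using ne that by (auto simp: L_def takeWhile_eq_Nil_iff hd_conv_nth)
  have "filter (\<lambda>r. r \<noteq> []) L = takeWhile (\<lambda>r. r \<noteq> []) L"
  proof (rule filter_eq_takeWhile)
    fix k k' assume k: "k \<le> k'" "k' < length L" "\<not> L ! k \<noteq> []"
    then have "at_cell N v k 0" using L_Nil[of k] ne by (auto simp: at_cell_def L_def)
    then have "N ! k' ! 0 = v" using upper_closedD[OF uc, of k 0 k' 0] k ne by (auto simp: L_def)
    then show "\<not> L ! k' \<noteq> []" using L_Nil k by (auto simp: L_def)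
  qed
  then show ?thesis unfolding R_op_def rows L_def .
qed

lemma at_cell_R_op:
  assumes ne: "\<forall>r\<in>set N. r \<noteq> []" and uc: "upper_closed v N"
  shows "at_cell (R_op v N) x i j \<longleftrightarrow> at_cell N x i j \<and> x \<noteq> v"
proof -
  have "at_cell (R_op v N) x i j \<longleftrightarrow>
      (i < length N \<and> (\<forall>k\<le>i. N ! k ! 0 \<noteq> v)) \<and> (j < length (N ! i) \<and> (\<forall>k\<le>j. N ! i ! k \<noteq> v)) \<and>
      N ! i ! j = x"
    using ne unfolding R_op_eq_takeWhile[OF ne uc] at_cell_def less_length_takeWhile_iff
    by (auto simp: takeWhile_nth takeWhile_eq_Nil_iff hd_conv_nth less_length_takeWhile_iff)
  also have "\<dots> \<longleftrightarrow> at_cell N x i j \<and> x \<noteq> v"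
  proof
    assume "at_cell N x i j \<and> x \<noteq> v"
    then have h: "i < length N" "j < length (N ! i)" "N ! i ! j = x" "x \<noteq> v"
      by (auto simp: at_cell_def)
    have "N ! k ! 0 \<noteq> v" if "k \<le> i" for k
      using upper_closedD[OF uc, of k 0 i j] h that ne by (auto simp: at_cell_def)
    moreover have "N ! i ! k \<noteq> v" if "k \<le> j" for k
      using upper_closedD[OF uc, of i k i j] h that by (auto simp: at_cell_def)
    ultimately show "(i < length N \<and> (\<forall>k\<le>i. N ! k ! 0 \<noteq> v)) \<and>
        (j < length (N ! i) \<and> (\<forall>k\<le>j. N ! i ! k \<noteq> v)) \<and> N ! i ! j = x"
      using h by auto
  qed (auto simp: at_cell_def)
  finally show ?thesis .
qed

lemma sorted_lengths_R_op:
  assumes s: "sorted (rev (map length N))" and ne: "\<forall>r\<in>set N. r \<noteq> []" and uc: "upper_closed v N"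
  shows "sorted (rev (map length (R_op v N)))"
  unfolding sorted_rev_iff_nth_mono
proof (intro allI impI)
  fix i i' assume i: "i \<le> i'" "i' < length (map length (R_op v N))"
  have "j < length (R_op v N ! i)" if j: "j < length (R_op v N ! i')" for j
  proof -
    have "at_cell (R_op v N) (R_op v N ! i' ! j) i' j" using i j by (auto simp: at_cell_def)
    then have a: "at_cell N (R_op v N ! i' ! j) i' j" "R_op v N ! i' ! j \<noteq> v"
      using at_cell_R_op[OF ne uc] by auto
    then have cell: "i < length N" "j < length (N ! i)"
      using cell_in_lower_row[OF s, of i i' j] i by (auto simp: at_cell_def)
    then have "N ! i ! j \<noteq> v"
      using upper_closedD[OF uc, of i j i' j] a i by (auto simp: at_cell_def)
    then have "at_cell (R_op v N) (N ! i ! j) i j" using at_cell_R_op[OF ne uc] cell by (auto simp: at_cell_def)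
    then show ?thesis by (simp add: at_cell_def)
  qed
  then have "\<not> length (R_op v N ! i) < length (R_op v N ! i')" by (meson less_irrefl)
  then show "map length (R_op v N) ! i' \<le> map length (R_op v N) ! i" using i by simp
qed

lemma upper_closed_transpose:
  assumes s: "sorted (rev (map length M))" and uc: "upper_closed v M"
  shows "upper_closed v (transpose M)"
  unfolding upper_closed_def
proof (intro allI impI)
  fix i j i' j' assume h: "at_cell (transpose M) v i j" "i \<le> i'" "j \<le> j'"
    "i' < length (transpose M)" "j' < length (transpose M ! i')"
  have "at_cell (transpose M) (transpose M ! i' ! j') i' j'" using h by (auto simp: at_cell_def)
  then have a: "at_cell M (transpose M ! i' ! j') j' i'" using at_cell_transpose[OF s] by blast
  have "at_cell M v j i" using h at_cell_transpose[OF s] by blast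
  from upper_closedD[OF uc this, of j' i'] a h have "M ! j' ! i' = v" by (auto simp: at_cell_def)
  then show "transpose M ! i' ! j' = v" using a by (simp add: at_cell_def)
qed

lemma transpose_R_op_transpose:
  assumes s: "sorted (rev (map length M))" and ne: "\<forall>r\<in>set M. r \<noteq> []" and uc: "upper_closed v M"
  shows "transpose (R_op v (transpose M)) = R_op v M"
proof (rule at_cell_ext)
  show "\<forall>r\<in>set (transpose (R_op v (transpose M))). r \<noteq> []" "\<forall>r\<in>set (R_op v M). r \<noteq> []"
    using nonempty_rows_transpose by (auto simp: R_op_def)
  have ne': "\<forall>r\<in>set (transpose M). r \<noteq> []" using nonempty_rows_transpose by blast
  have uc': "upper_closed v (transpose M)" by (rule upper_closed_transpose[OF s uc])
  have s': "sorted (rev (map length (R_op v (transpose M))))"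
    by (rule sorted_lengths_R_op[OF _ ne' uc']) simp
  fix x i j
  have "at_cell (transpose (R_op v (transpose M))) x i j \<longleftrightarrow> at_cell (R_op v (transpose M)) x j i"
    by (rule at_cell_transpose[OF s'])
  also have "\<dots> \<longleftrightarrow> at_cell (transpose M) x j i \<and> x \<noteq> v" by (rule at_cell_R_op[OF ne' uc'])
  also have "\<dots> \<longleftrightarrow> at_cell M x i j \<and> x \<noteq> v" using at_cell_transpose[OF s] by simp
  also have "\<dots> \<longleftrightarrow> at_cell (R_op v M) x i j" using at_cell_R_op[OF ne uc] by simp
  finally show "at_cell (transpose (R_op v (transpose M))) x i j \<longleftrightarrow> at_cell (R_op v M) x i j" .
qed

lemma set_map_int_upt: "set (map int [1..<Suc n]) = {1..int n}"
proof
  show "{1..int n} \<subseteq> set (map int [1..<Suc n])"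
  proof
    fix x assume "x \<in> {1..int n}"
    then have "x = int (nat x)" "nat x \<in> set [1..<Suc n]" by auto
    then show "x \<in> set (map int [1..<Suc n])" by (metis image_eqI set_map)
  qed
qed auto

lemma standard_tableauD:
  assumes "standard_tableau n T"
  shows "\<forall>r\<in>set T. r \<noteq> []" "sorted (rev (map length T))" "distinct (concat T)"
    "set (concat T) = {1..int n}"
    "i < length T \<Longrightarrow> j < j' \<Longrightarrow> j' < length (T ! i) \<Longrightarrow> T ! i ! j < T ! i ! j'"
    "Suc i < length T \<Longrightarrow> j < length (T ! Suc i) \<Longrightarrow> T ! i ! j < T ! Suc i ! j"
proof -
  have T: "\<forall>r\<in>set T. r \<noteq> []" "sorted_wrt (\<ge>) (map length T)" "\<forall>r\<in>set T. sorted_wrt (<) r"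
    "\<forall>i j. Suc i < length T \<and> j < length (T ! Suc i) \<longrightarrow> T ! i ! j < T ! Suc i ! j"
    "mset (concat T) = mset (map int [1..<Suc n])"
    using assms unfolding standard_tableau_def shape_def by auto
  show "\<forall>r\<in>set T. r \<noteq> []" using T(1) .
  show "sorted (rev (map length T))" using T(2) by (simp add: sorted_wrt_rev)
  show "distinct (concat T)" using mset_eq_imp_distinct_iff[OF T(5)] by (simp add: distinct_map)
  have "set (concat T) = set (map int [1..<Suc n])" using arg_cong[OF T(5), of set_mset] by simp
  then show "set (concat T) = {1..int n}" by (simp only: set_map_int_upt)
  show "i < length T \<Longrightarrow> j < j' \<Longrightarrow> j' < length (T ! i) \<Longrightarrow> T ! i ! j < T ! i ! j'"
    using T(3) by (meson nth_mem sorted_wrt_nth_less)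
  show "Suc i < length T \<Longrightarrow> j < length (T ! Suc i) \<Longrightarrow> T ! i ! j < T ! Suc i ! j"
    using T(4) by blast
qed

lemma standard_tableau_mono:
  assumes st: "standard_tableau n T" and x: "at_cell T x i j" and y: "at_cell T y i' j'"
    and "i \<le> i'" "j \<le> j'"
  shows "x \<le> y"
proof -
  note T = standard_tableauD[OF st]
  have col: "T ! i ! c \<le> T ! (i + d) ! c" if "i + d < length T" "c < length (T ! (i + d))" for d c
    using that
  proof (induction d)
    case (Suc d)
    have "c < length (T ! (i + d))"
      using cell_in_lower_row[OF T(2), of "i + d" "i + Suc d" c] Suc.prems by simp
    then have "T ! i ! c \<le> T ! (i + d) ! c" using Suc by simp
    also have "\<dots> < T ! Suc (i + d) ! c" using T(6)[of "i + d" c] Suc.prems by simp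
    finally show ?case by simp
  qed simp
  have i': "i' < length T" "j' < length (T ! i')" using y by (auto simp: at_cell_def)
  have "j' < length (T ! i)" using cell_in_lower_row[OF T(2) \<open>i \<le> i'\<close> i'] .
  then have "x \<le> T ! i ! j'"
    using x T(5)[of i j j'] \<open>j \<le> j'\<close> by (cases "j = j'") (auto simp: at_cell_def)
  also have "\<dots> \<le> T ! i' ! j'" using col[of "i' - i" j'] i' \<open>i \<le> i'\<close> by simp
  finally show ?thesis using y by (simp add: at_cell_def)
qed

definition cell_of :: "int list list \<Rightarrow> int \<Rightarrow> nat \<times> nat" where
  "cell_of T x = (SOME c. at_cell T x (fst c) (snd c))"

definition row_of :: "int list list \<Rightarrow> int \<Rightarrow> nat" where
  "row_of T x = fst (cell_of T x)"

definition col_of :: "int list list \<Rightarrow> int \<Rightarrow> nat" where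
  "col_of T x = snd (cell_of T x)"

lemma at_cell_cell_of: "x \<in> set (concat T) \<Longrightarrow> at_cell T x (row_of T x) (col_of T x)"
proof -
  assume "x \<in> set (concat T)"
  then obtain i j where "at_cell T x i j" using mem_concat_iff_at_cell by blast
  then have "\<exists>c. at_cell T x (fst c) (snd c)" by (intro exI[of _ "(i, j)"]) simp
  then show ?thesis unfolding row_of_def col_of_def cell_of_def by (rule someI_ex)
qed

lemma cell_of_eq:
  assumes "distinct (concat T)" and "at_cell T x i j"
  shows "row_of T x = i \<and> col_of T x = j"
proof -
  have "at_cell T x (row_of T x) (col_of T x)"
    using assms(2) mem_concat_iff_at_cell by (blast intro: at_cell_cell_of)
  then show ?thesis using at_cell_unique assms by metis
qed

lemma standard_tableau_cell_placement:
  assumes st: "standard_tableau n T"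
  shows "cell_placement (row_of T) (col_of T) n"
proof
  note T = standard_tableauD[OF st]
  have cell: "at_cell T x (row_of T x) (col_of T x)" if "x \<in> {1..int n}" for x
    using at_cell_cell_of T(4) that by blast
  fix x y
  assume "x \<in> {1..int n}" "y \<in> {1..int n}"
  then have cx: "at_cell T x (row_of T x) (col_of T x)" and cy: "at_cell T y (row_of T y) (col_of T y)"
    using cell by blast+
  show "row_of T x = row_of T y \<Longrightarrow> col_of T x = col_of T y \<Longrightarrow> x = y"
    using cx cy unfolding at_cell_def by metis
  show "row_of T x \<le> row_of T y \<Longrightarrow> col_of T x \<le> col_of T y \<Longrightarrow> x \<le> y"
    using standard_tableau_mono[OF st cx cy] .
next
  note T = standard_tableauD[OF st]
  fix y r c assume y: "y \<in> {1..int n}" "r \<le> row_of T y" "c \<le> col_of T y"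
  then have "at_cell T y (row_of T y) (col_of T y)" using at_cell_cell_of T(4) by blast
  then have "r < length T" "c < length (T ! r)"
    using y cell_in_lower_row[OF T(2) y(2)] by (auto simp: at_cell_def)
  then have rc: "at_cell T (T ! r ! c) r c" by (simp add: at_cell_def)
  then have "T ! r ! c \<in> {1..int n}" using mem_concat_iff_at_cell T(4) by blast
  with cell_of_eq[OF T(3) rc] show "\<exists>x\<in>{1..int n}. row_of T x = r \<and> col_of T x = c"
    by (intro bexI[of _ "T ! r ! c"]) auto
qed

lemma standard_tableau_reading_word:
  assumes st: "standard_tableau n T"
  shows "distinct (reading_word T)" "set (reading_word T) = {1..int n}"
    "distinct (reading_word (tab_transpose T))" "set (reading_word (tab_transpose T)) = {1..int n}"
proof -
  note T = standard_tableauD[OF st]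
  have rev: "distinct (concat (rev M)) \<longleftrightarrow> distinct (concat M)" for M :: "int list list"
    by (induction M) auto
  show "distinct (reading_word T)" "set (reading_word T) = {1..int n}"
    "distinct (reading_word (tab_transpose T))" "set (reading_word (tab_transpose T)) = {1..int n}"
    using T(3,4) distinct_concat_transpose[OF T(2)] set_concat_transpose[OF T(2)]
    by (simp_all add: reading_word_def tab_transpose_def rev)
qed

lemma precedes_concat_rev:
  "precedes x y (concat (rev M)) \<longleftrightarrow>
   (\<exists>i j i' j'. at_cell M x i j \<and> at_cell M y i' j' \<and> (i' < i \<or> i = i' \<and> j < j'))"
  (is "_ \<longleftrightarrow> ?cells")
proof -
  let ?L = "length M"
  have "precedes x y (concat (rev M)) \<longleftrightarrow> (\<exists>i j i' j'. (i < ?L \<and> at_cell M x (?L - Suc i) j) \<and>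
      (i' < ?L \<and> at_cell M y (?L - Suc i') j') \<and> (i < i' \<or> i = i' \<and> j < j'))"
    by (simp add: precedes_concat at_cell_rev)
  also have "\<dots> \<longleftrightarrow> ?cells"
  proof
    assume "\<exists>i j i' j'. (i < ?L \<and> at_cell M x (?L - Suc i) j) \<and>
      (i' < ?L \<and> at_cell M y (?L - Suc i') j') \<and> (i < i' \<or> i = i' \<and> j < j')"
    then obtain i j i' j' where "i < ?L" "at_cell M x (?L - Suc i) j" "i' < ?L"
      "at_cell M y (?L - Suc i') j'" "i < i' \<or> i = i' \<and> j < j'" by blast
    then show ?cells
      by (intro exI[of _ "?L - Suc i"] exI[of _ j] exI[of _ "?L - Suc i'"] exI[of _ j']) auto
  next
    assume ?cells
    then obtain i j i' j' where h: "at_cell M x i j" "at_cell M y i' j'" "i' < i \<or> i = i' \<and> j < j'"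
      by blast
    then have "i < ?L" "i' < ?L" by (auto simp: at_cell_def)
    then show "\<exists>i j i' j'. (i < ?L \<and> at_cell M x (?L - Suc i) j) \<and>
      (i' < ?L \<and> at_cell M y (?L - Suc i') j') \<and> (i < i' \<or> i = i' \<and> j < j')"
      using h by (intro exI[of _ "?L - Suc i"] exI[of _ j] exI[of _ "?L - Suc i'"] exI[of _ j']) auto
  qed
  finally show ?thesis .
qed

lemma precedes_rev_reading_word_iff:
  assumes st: "standard_tableau n T" and x: "x \<in> {1..int n}" and y: "y \<in> {1..int n}"
  shows "precedes x y (rev (reading_word T)) \<longleftrightarrow> row_order (row_of T) (col_of T) x y"
proof -
  note T = standard_tableauD[OF st]
  have cells: "at_cell T x (row_of T x) (col_of T x)" "at_cell T y (row_of T y) (col_of T y)"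
    using at_cell_cell_of T(4) x y by blast+
  have "precedes x y (rev (reading_word T)) \<longleftrightarrow> precedes y x (concat (rev T))"
    by (simp add: precedes_rev reading_word_def)
  also have "\<dots> \<longleftrightarrow> row_order (row_of T) (col_of T) x y"
  proof
    assume "precedes y x (concat (rev T))"
    then obtain i j i' j' where c: "at_cell T y i j" "at_cell T x i' j'" "i' < i \<or> i = i' \<and> j < j'"
      unfolding precedes_concat_rev by blast
    then show "row_order (row_of T) (col_of T) x y"
      using cell_of_eq[OF T(3) c(1)] cell_of_eq[OF T(3) c(2)] unfolding row_order_def by auto
  next
    assume "row_order (row_of T) (col_of T) x y"
    then show "precedes y x (concat (rev T))"
      unfolding precedes_concat_rev row_order_def using cells
      by (intro exI[of _ "row_of T y"] exI[of _ "col_of T y"] exI[of _ "row_of T x"]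
          exI[of _ "col_of T x"]) auto
  qed
  finally show ?thesis .
qed

lemma precedes_reading_word_transpose_iff:
  assumes st: "standard_tableau n T" and x: "x \<in> {1..int n}" and y: "y \<in> {1..int n}"
  shows "precedes x y (reading_word (tab_transpose T)) \<longleftrightarrow> col_order (row_of T) (col_of T) x y"
proof -
  note T = standard_tableauD[OF st]
  have cells: "at_cell (transpose T) x (col_of T x) (row_of T x)"
    "at_cell (transpose T) y (col_of T y) (row_of T y)"
    using at_cell_cell_of T(4) x y at_cell_transpose[OF T(2)] by blast+
  have "precedes x y (reading_word (tab_transpose T)) \<longleftrightarrow> precedes x y (concat (rev (transpose T)))"
    by (simp add: reading_word_def tab_transpose_def)
  also have "\<dots> \<longleftrightarrow> col_order (row_of T) (col_of T) x y"
  proof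
    assume "precedes x y (concat (rev (transpose T)))"
    then obtain i j i' j' where c: "at_cell T x j i" "at_cell T y j' i'" "i' < i \<or> i = i' \<and> j < j'"
      unfolding precedes_concat_rev at_cell_transpose[OF T(2)] by blast
    then show "col_order (row_of T) (col_of T) x y"
      using cell_of_eq[OF T(3) c(1)] cell_of_eq[OF T(3) c(2)] unfolding col_order_def by auto
  next
    assume "col_order (row_of T) (col_of T) x y"
    then show "precedes x y (concat (rev (transpose T)))"
      unfolding precedes_concat_rev col_order_def using cells
      by (intro exI[of _ "col_of T x"] exI[of _ "row_of T x"] exI[of _ "col_of T y"]
          exI[of _ "row_of T y"]) auto
  qed
  finally show ?thesis .
qed

section \<open>Both sides as relabellings\<close>

lemma refill_concat: "refill (map length L) (concat L) = L"
  by (induction L) auto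

lemma tab_op_map:
  assumes "f (reading_word X) = map g (reading_word X)"
  shows "tab_op f X = map (map g) X"
proof -
  have "tab_op f X = rev (refill (map length (map (map g) (rev X))) (concat (map (map g) (rev X))))"
    using assms by (simp add: tab_op_def reading_word_def map_concat comp_def)
  also have "\<dots> = map (map g) X" by (simp only: refill_concat) (simp add: rev_map)
  finally show ?thesis .
qed

lemma B2_0_eq_chain_label:
  assumes d: "distinct (reading_word S)" and s: "set (reading_word S) = {1..int n}" and n: "2 \<le> n"
  shows "B2_0 S = R_op (int n - 1) (map (map (chain_label (\<lambda>x y. precedes x y (reading_word S)) (n - 2))) S)"
proof -
  have "length (concat S) = length (reading_word S)"
    by (simp add: reading_word_def length_concat flip: rev_map)
  also have "\<dots> = n" using distinct_card[OF d] s by simp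
  finally have len: "length (concat S) = n" .
  have "sigma_chain n (r_op 0 1 1 1 (tau_m1 (reading_word S))) =
        map (chain_label (\<lambda>x y. precedes x y (reading_word S)) (n - 2)) (reading_word S)"
    by (rule sigma_chain_eq_chain_label[OF d s n])
  then have "tab_op (\<lambda>w. sigma_chain n (r_op 0 1 1 1 (tau_m1 w))) S =
      map (map (chain_label (\<lambda>x y. precedes x y (reading_word S)) (n - 2))) S"
    by (rule tab_op_map)
  then show ?thesis by (simp add: B2_0_def Let_def len)
qed

lemma sigmabar_side_eq_chain_label:
  assumes d: "distinct (reading_word T)" and s: "set (reading_word T) = {1..int n}" and n: "2 \<le> n"
  shows "tab_op (\<lambda>w. sigmabar_chain n (r_op 1 0 1 1 (tau_m1 w))) T =
    map (map (chain_label (\<lambda>x y. precedes x y (rev (reading_word T))) (n - 2))) T"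
proof (rule tab_op_map)
  let ?u = "rev (reading_word T)"
  have "rev (r_op 1 0 1 1 (tau_m1 (reading_word T))) = r_op 0 1 1 1 (tau_m1 ?u)"
    by (simp add: r_op_swap[of 1 0] r_op_def tau_m1_def rev_map)
  then have "sigmabar_chain n (r_op 1 0 1 1 (tau_m1 (reading_word T))) =
        rev (sigma_chain n (r_op 0 1 1 1 (tau_m1 ?u)))"
    by (simp add: sigmabar_chain_conv_sigma_chain)
  also have "\<dots> = map (chain_label (\<lambda>x y. precedes x y ?u) (n - 2)) (reading_word T)"
    using sigma_chain_eq_chain_label[of ?u n] d s n by (simp add: rev_map)
  finally show "sigmabar_chain n (r_op 1 0 1 1 (tau_m1 (reading_word T))) =
      map (chain_label (\<lambda>x y. precedes x y ?u) (n - 2)) (reading_word T)" .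
qed

lemma upper_closed_chain_label:
  assumes st: "standard_tableau n T" and n: "2 \<le> n"
    and G0: "corner_pair (row_of T) (col_of T) 0 1 2"
  shows "upper_closed (int n - 1)
    (map (map (chain_label (row_order (row_of T) (col_of T)) (n - 2))) T)"
    (is "upper_closed _ (map (map ?\<Phi>) T)")
  unfolding upper_closed_def
proof (intro allI impI)
  interpret cell_placement "row_of T" "col_of T" n
    by (rule standard_tableau_cell_placement[OF st])
  note T = standard_tableauD[OF st]
  define p where "p = fst (top_pair (row_order (row_of T) (col_of T)) (n - 2))"
  define q where "q = snd (top_pair (row_order (row_of T) (col_of T)) (n - 2))"
  have G: "corner_pair (row_of T) (col_of T) (n - 2) p q"
    using corner_pair_top_pair[OF G0] unfolding p_def q_def by simp
  have top: "?\<Phi> x = int n - 1 \<longleftrightarrow> x = p \<or> x = q" if "x \<in> {1..int n}" for x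
    using chain_label_eq_top_iff[OF that n] unfolding p_def q_def .
  fix i j i' j' assume h: "at_cell (map (map ?\<Phi>) T) (int n - 1) i j" "i \<le> i'" "j \<le> j'"
    "i' < length (map (map ?\<Phi>) T)" "j' < length (map (map ?\<Phi>) T ! i')"
  have x: "at_cell T (T ! i ! j) i j" and y: "at_cell T (T ! i' ! j') i' j'"
    using h by (auto simp: at_cell_def)
  have range: "T ! i ! j \<in> {1..int n}" "T ! i' ! j' \<in> {1..int n}"
    using x y mem_concat_iff_at_cell T(4) by blast+
  have "T ! i ! j = p \<or> T ! i ! j = q" using top[OF range(1)] h(1) by (auto simp: at_cell_def)
  moreover have "row_of T (T ! i ! j) \<le> row_of T (T ! i' ! j')"
    "col_of T (T ! i ! j) \<le> col_of T (T ! i' ! j')"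
    using cell_of_eq[OF T(3) x] cell_of_eq[OF T(3) y] h(2,3) by auto
  moreover have "T ! i' ! j' \<in> {1..int (n - 2) + 2}" using range(2) n by auto
  ultimately have "T ! i' ! j' = p \<or> T ! i' ! j' = q"
    using corner_pair_maximal[OF G] by blast
  then show "map (map ?\<Phi>) T ! i' ! j' = int n - 1" using top[OF range(2)] h by auto
qed

lemma B2_1_eq_sigmabar_side:
  assumes st: "standard_tableau n T" and n: "2 \<le> n" and pr21: "precedes 2 1 (reading_word T)"
  shows "B2_1 T = R_op (int n - 1) (tab_op (\<lambda>w. sigmabar_chain n (r_op 1 0 1 1 (tau_m1 w))) T)"
proof -
  interpret cell_placement "row_of T" "col_of T" n
    by (rule standard_tableau_cell_placement[OF st])
  note T = standard_tableauD[OF st] and rw = standard_tableau_reading_word[OF st]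
  define \<Phi> where "\<Phi> = chain_label (row_order (row_of T) (col_of T)) (n - 2)"
  have "row_order (row_of T) (col_of T) 1 2"
    using pr21 precedes_rev_reading_word_iff[OF st, of 1 2] n by (simp add: precedes_rev)
  then have G0: "corner_pair (row_of T) (col_of T) 0 1 2" by (rule corner_pair_initial[OF n])
  have "\<forall>x\<in>{1..int n}. \<forall>y\<in>{1..int n}.
      precedes x y (reading_word (tab_transpose T)) = col_order (row_of T) (col_of T) x y"
    using precedes_reading_word_transpose_iff[OF st] by blast
  then have "chain_label (\<lambda>x y. precedes x y (reading_word (tab_transpose T))) (n - 2) =
      chain_label (col_order (row_of T) (col_of T)) (n - 2)"
    by (rule chain_label_cong_range) simp
  then have lhs: "B2_0 (transpose T) = R_op (int n - 1) (map (map \<Phi>) (transpose T))"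
    using B2_0_eq_chain_label[OF rw(3,4) n] chain_label_col_order_eq_row_order[OF G0]
    by (simp add: tab_transpose_def \<Phi>_def)
  have "\<forall>x\<in>{1..int n}. \<forall>y\<in>{1..int n}.
      precedes x y (rev (reading_word T)) = row_order (row_of T) (col_of T) x y"
    using precedes_rev_reading_word_iff[OF st] by blast
  then have "chain_label (\<lambda>x y. precedes x y (rev (reading_word T))) (n - 2) = \<Phi>"
    unfolding \<Phi>_def by (rule chain_label_cong_range) simp
  then have rhs: "tab_op (\<lambda>w. sigmabar_chain n (r_op 1 0 1 1 (tau_m1 w))) T = map (map \<Phi>) T"
    using sigmabar_side_eq_chain_label[OF rw(1,2) n] by simp
  have "transpose (R_op (int n - 1) (transpose (map (map \<Phi>) T))) = R_op (int n - 1) (map (map \<Phi>) T)"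
    using T(1,2) upper_closed_chain_label[OF st n G0]
    by (intro transpose_R_op_transpose) (auto simp: \<Phi>_def comp_def)
  then show ?thesis by (simp add: B2_1_def tab_transpose_def lhs rhs transpose_map_map)
qed

theorem mainTheorem14:
  shows "(\<forall>(T::tableau) n. standard_tableau n T \<and> 2 \<le> n \<and> precedes 2 1 (reading_word T) \<longrightarrow>
            B2_1 T = R_op (int n - 1)
                       (tab_op (\<lambda>w. sigmabar_chain n (r_op 1 0 1 1 (tau_m1 w))) T))
       \<and> (\<forall>(w::word) (a::int). (count_list w a, count_list w (a + 1)) \<in> {(1,2),(2,1)} \<longrightarrow>
            sigma_op a (rev w) = rev (sigmabar_op a w))"
  using B2_1_eq_sigmabar_side sigma_op_rev by blast

end
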